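(* Let $G$ be a tree on vertex set $[n]$ and let $\mathrm{CIM}_G=\operatorname{conv}\left(c_\mathcal{G}\colon \mathcal{G}\text{ a DAG on }[n]\text{ with skeleton } G\right)$. Then $\operatorname{diam}(\mathrm{CIM}_G)$ is less than or equal to the number of internal vertices (non-leaf vertices) of $G$.
   Context: For a directed acyclic graph (DAG) $\mathcal{G}$ on vertex set $[n]=\{1,\dots,n\}$, the characteristic imset $c_\mathcal{G}$ is the 0/1-vector indexed by the subsets $S\subseteq[n]$ with $|S|\geq 2$, with $c_\mathcal{G}(S)=1$ if there exists $i\in S$ such that $S\subseteq \mathrm{pa}_\mathcal{G}(i)\cup\{i\}$ (where $\mathrm{pa}_\mathcal{G}(i)$ is the set of parents of $i$), and $c_\mathcal{G}(S)=0$ otherwise. The skeleton of a DAG is the undirected graph with the same vertices and adjacencies. For a polytope $P$, the vertex-edge graph $G(P)$ has the vertices of $P$ as nodes, with two vertices adjacent iff their convex hull is an edge of $P$; $\operatorname{diam}(P)$ is the maximum over pairs of vertices of the length of a shortest path between them in $G(P)$. *)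

theory Defs
  imports "HOL-Analysis.Analysis" "HOL-Library.Extended_Nat"
begin

text \<open>Vertex set [n] is represented by a finite type 'n with n = CARD('n).
  Undirected graphs are sets of 2-element vertex sets; DAGs are edge relations.\<close>

definition is_dag :: "('n \<times> 'n) set \<Rightarrow> bool" where
  "is_dag D \<longleftrightarrow> acyclic D"

definition parents :: "('n \<times> 'n) set \<Rightarrow> 'n \<Rightarrow> 'n set" where
  "parents D i = {j. (j, i) \<in> D}"

definition skeleton :: "('n \<times> 'n) set \<Rightarrow> 'n set set" where
  "skeleton D = {{i, j} | i j. (i, j) \<in> D}"

text \<open>Coordinates are indexed by all subsets of the vertex set;
  the coordinates with |S| < 2 are identically 0 (a fixed linear embedding of the
  paper's space indexed by subsets S with |S| >= 2).\<close>
definition char_imset :: "('n::finite \<times> 'n) set \<Rightarrow> real ^ ('n set)" where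
  "char_imset D = (\<chi> S. if 2 \<le> card S \<and> (\<exists>i\<in>S. S \<subseteq> parents D i \<union> {i}) then 1 else 0)"

definition adj :: "'n set set \<Rightarrow> 'n \<Rightarrow> 'n \<Rightarrow> bool" where
  "adj G u v \<longleftrightarrow> {u, v} \<in> G"

definition is_simple_graph :: "'n set set \<Rightarrow> bool" where
  "is_simple_graph G \<longleftrightarrow> (\<forall>e\<in>G. card e = 2)"

definition graph_connected :: "'n set set \<Rightarrow> bool" where
  "graph_connected G \<longleftrightarrow> (\<forall>u v. (u, v) \<in> {(x, y). adj G x y}\<^sup>*)"

definition has_cycle :: "'n set set \<Rightarrow> bool" where
  "has_cycle G \<longleftrightarrow> (\<exists>vs. length vs \<ge> 3 \<and> distinct vs \<and>
      (\<forall>i. Suc i < length vs \<longrightarrow> adj G (vs ! i) (vs ! Suc i)) \<and> adj G (last vs) (hd vs))"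

definition is_tree :: "'n set set \<Rightarrow> bool" where
  "is_tree G \<longleftrightarrow> is_simple_graph G \<and> graph_connected G \<and> \<not> has_cycle G"

definition degree :: "'n set set \<Rightarrow> 'n \<Rightarrow> nat" where
  "degree G v = card {e \<in> G. v \<in> e}"

definition internal_vertices :: "'n set set \<Rightarrow> 'n set" where
  "internal_vertices G = {v. degree G v \<noteq> 1}"

definition CIM :: "('n::finite) set set \<Rightarrow> (real ^ ('n set)) set" where
  "CIM G = convex hull {char_imset D | D. is_dag D \<and> skeleton D = G}"

definition poly_vertices :: "'a::real_vector set \<Rightarrow> 'a set" where
  "poly_vertices P = {x. x extreme_point_of P}"

definition poly_edge :: "'a::real_vector set \<Rightarrow> 'a \<Rightarrow> 'a \<Rightarrow> bool" where
  "poly_edge P u v \<longleftrightarrow> u \<in> poly_vertices P \<and> v \<in> poly_vertices P \<and> u \<noteq> v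
      \<and> convex hull {u, v} face_of P"

definition poly_walk :: "'a::real_vector set \<Rightarrow> 'a \<Rightarrow> 'a \<Rightarrow> nat \<Rightarrow> bool" where
  "poly_walk P u v k \<longleftrightarrow> (\<exists>xs. length xs = Suc k \<and> hd xs = u \<and> last xs = v \<and>
      (\<forall>i<k. poly_edge P (xs ! i) (xs ! Suc i)))"

definition poly_dist :: "'a::real_vector set \<Rightarrow> 'a \<Rightarrow> 'a \<Rightarrow> enat" where
  "poly_dist P u v = (if \<exists>k. poly_walk P u v k then enat (LEAST k. poly_walk P u v k) else \<infinity>)"

definition poly_diam :: "'a::real_vector set \<Rightarrow> enat" where
  "poly_diam P = Sup {poly_dist P u v | u v. u \<in> poly_vertices P \<and> v \<in> poly_vertices P}"

end

theory Submission
  imports Defs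
begin

text \<open>For a triangle-free skeleton, c(D) is determined by the skeleton together with the
  collider parent sets, i.e. the parent sets of size at least two. Moebius inversion over the
  neighbourhoods yields, for arbitrary weights F, a linear functional whose value at c(D) is
  the sum over all vertices x of F(x, collider parent set of x), up to a constant. Penalising
  every vertex at which the collider parent set agrees with neither that of D1 nor that of D2
  exposes a face of CIM whose vertices come from the vertex-wise mixtures of D1 and D2. A
  mixture D' with c(D') \<noteq> c(D1) that changes as few collider parent sets of D1 as possible
  spans an edge with c(D1), and agrees with D2 at strictly more vertices than D1 does.
  Collider parent sets are nonempty only at internal vertices, so iterating gives a path of
  at most that many edges.\<close>

definition triangle_free :: "'n set set \<Rightarrow> bool" where
  "triangle_free G \<longleftrightarrow>
     (\<forall>a b c. {a, b} \<in> G \<longrightarrow> {b, c} \<in> G \<longrightarrow> {c, a} \<in> G \<longrightarrow> a = b \<or> b = c \<or> c = a)"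

lemma tree_imp_triangle_free:
  assumes "is_tree G"
  shows "triangle_free G"
  unfolding triangle_free_def
proof (intro allI impI)
  fix a b c
  assume edges: "{a, b} \<in> G" "{b, c} \<in> G" "{c, a} \<in> G"
  show "a = b \<or> b = c \<or> c = a"
  proof (rule ccontr)
    assume "\<not> (a = b \<or> b = c \<or> c = a)"
    then have "has_cycle G"
      unfolding has_cycle_def using edges
      by (intro exI[of _ "[a, b, c]"]) (auto simp: adj_def less_Suc_eq nth_Cons')
    then show False
      using assms by (simp add: is_tree_def)
  qed
qed

definition neighbours :: "'n set set \<Rightarrow> 'n \<Rightarrow> 'n set" where
  "neighbours G x = {y. {x, y} \<in> G}"

lemma not_in_neighbours: "is_simple_graph G \<Longrightarrow> x \<notin> neighbours G x"
  by (auto simp: is_simple_graph_def neighbours_def)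

lemma parents_subset_neighbours: "parents D x \<subseteq> neighbours (skeleton D) x"
  by (auto simp: parents_def neighbours_def skeleton_def insert_commute)

definition collider_parents :: "('n \<times> 'n) set \<Rightarrow> 'n \<Rightarrow> 'n set" where
  "collider_parents D x = (if 2 \<le> card (parents D x) then parents D x else {})"

lemma clique_of_small_parent_set_in_skeleton:
  fixes D :: "('n::finite \<times> 'n) set"
  assumes "i \<in> S" "S \<subseteq> parents D i \<union> {i}" "2 \<le> card S" "card (parents D i) < 2"
  shows "S \<in> skeleton D"
proof -
  have "card (S - {i}) \<le> card (parents D i)"
    using assms(2) by (intro card_mono) auto
  moreover have "card (S - {i}) = card S - 1"
    using assms(1) by simp
  ultimately have "card (S - {i}) = 1"
    using assms(3,4) by linarith
  then obtain j where "S - {i} = {j}"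
    by (auto simp: card_Suc_eq)
  then have "S = {j, i}" "(j, i) \<in> D"
    using assms(1,2) by (auto simp: parents_def)
  then show ?thesis
    by (auto simp: skeleton_def)
qed

lemma char_imset_condition_iff:
  fixes D :: "('n::finite \<times> 'n) set"
  assumes "2 \<le> card S"
  shows "(\<exists>i\<in>S. S \<subseteq> parents D i \<union> {i}) \<longleftrightarrow>
         (\<exists>i\<in>S. S \<subseteq> collider_parents D i \<union> {i}) \<or> S \<in> skeleton D"
proof
  assume "\<exists>i\<in>S. S \<subseteq> parents D i \<union> {i}"
  then obtain i where "i \<in> S" "S \<subseteq> parents D i \<union> {i}"
    by blast
  then show "(\<exists>i\<in>S. S \<subseteq> collider_parents D i \<union> {i}) \<or> S \<in> skeleton D"
    using clique_of_small_parent_set_in_skeleton[of i S D] assms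
    by (cases "2 \<le> card (parents D i)") (auto simp: collider_parents_def)
next
  assume "(\<exists>i\<in>S. S \<subseteq> collider_parents D i \<union> {i}) \<or> S \<in> skeleton D"
  then show "\<exists>i\<in>S. S \<subseteq> parents D i \<union> {i}"
    by (auto simp: collider_parents_def skeleton_def parents_def split: if_splits)
qed

lemma char_imset_eqI:
  fixes D E :: "('n::finite \<times> 'n) set"
  assumes "skeleton D = skeleton E" "collider_parents D = collider_parents E"
  shows "char_imset D = char_imset E"
proof -
  have same_condition:
    "(\<exists>i\<in>S. S \<subseteq> parents D i \<union> {i}) \<longleftrightarrow> (\<exists>i\<in>S. S \<subseteq> parents E i \<union> {i})"
    if "2 \<le> card S" for S
    by (simp only: char_imset_condition_iff[OF that] assms)
  show ?thesis
    unfolding char_imset_def vec_eq_iff vec_lambda_beta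
    by (intro allI if_cong conj_cong refl) (simp_all only: same_condition)
qed

text \<open>For \<open>i \<in> R\<close>, the vertices x, i and any other \<open>r \<in> R\<close> would form a triangle, so
  only \<open>i = x\<close> can witness that \<open>insert x R\<close> lies in some \<open>pa(i) \<union> {i}\<close>.\<close>
lemma char_imset_insert_neighbours:
  fixes D :: "('n::finite \<times> 'n) set"
  assumes simple: "is_simple_graph (skeleton D)" and tri: "triangle_free (skeleton D)"
    and R: "R \<subseteq> neighbours (skeleton D) x" "2 \<le> card R"
  shows "char_imset D $ insert x R = (if R \<subseteq> parents D x then 1 else 0)"
proof -
  have "x \<notin> R"
    using R(1) not_in_neighbours[OF simple] by blast
  then have card: "2 \<le> card (insert x R)"
    using R(2) by (simp add: card_insert_if)
  have "R \<subseteq> parents D x" if "i \<in> R" "insert x R \<subseteq> parents D i \<union> {i}" for i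
  proof -
    have "\<not> R \<subseteq> {i}"
      using R(2) card_mono[of "{i}" R] by auto
    then obtain r where r: "r \<in> R" "r \<noteq> i"
      by blast
    have "(x, i) \<in> D" "(r, i) \<in> D"
      using that r \<open>x \<notin> R\<close> by (auto simp: parents_def)
    then have "{x, i} \<in> skeleton D" "{i, r} \<in> skeleton D"
      by (auto simp: skeleton_def insert_commute)
    moreover have "{r, x} \<in> skeleton D"
      using R(1) r by (auto simp: neighbours_def insert_commute)
    ultimately show ?thesis
      using tri r that \<open>x \<notin> R\<close> unfolding triangle_free_def by blast
  qed
  then have "(\<exists>i\<in>insert x R. insert x R \<subseteq> parents D i \<union> {i}) \<longleftrightarrow> R \<subseteq> parents D x"
    using \<open>x \<notin> R\<close> by blast
  then show ?thesis
    using card by (simp add: char_imset_def)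
qed

lemma sum_alternating_interval_subsets:
  assumes "finite A" "Q \<subseteq> A"
  shows "(\<Sum>R | Q \<subseteq> R \<and> R \<subseteq> A. (-1::'a::ring_1) ^ card R) = (if A = Q then (-1) ^ card Q else 0)"
proof (cases "A = Q")
  case True
  then have "{R. Q \<subseteq> R \<and> R \<subseteq> A} = {Q}"
    by auto
  then show ?thesis
    using True by simp
next
  case False
  then have "Q \<subset> A"
    using assms(2) by blast
  have "(\<Sum>R | R \<subseteq> A \<and> Q \<subseteq> R. (-1::'a) ^ card R) = 0"
    using card_subsupersets_even_odd[OF assms(1) \<open>Q \<subset> A\<close>] assms(1)
    by (intro sum_alternating_cancels) (simp_all add: conj_commute conj_left_commute)
  then show ?thesis
    using False by (simp add: conj_commute)
qed

definition moebius_vec :: "'n::finite set set \<Rightarrow> 'n \<Rightarrow> 'n set \<Rightarrow> real ^ ('n set)" where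
  "moebius_vec G x Q = (-1) ^ card Q *\<^sub>R
     (\<Sum>R | Q \<subseteq> R \<and> R \<subseteq> neighbours G x. (-1) ^ card R *\<^sub>R axis (insert x R) 1)"

lemma inner_moebius_vec_char_imset:
  fixes D :: "('n::finite \<times> 'n) set"
  assumes simple: "is_simple_graph (skeleton D)" and tri: "triangle_free (skeleton D)"
    and Q: "Q \<subseteq> neighbours (skeleton D) x" "2 \<le> card Q"
  shows "moebius_vec (skeleton D) x Q \<bullet> char_imset D = (if parents D x = Q then 1 else 0)"
proof -
  let ?N = "neighbours (skeleton D) x"
  let ?p = "parents D x"
  have "moebius_vec (skeleton D) x Q \<bullet> char_imset D
      = (-1) ^ card Q * (\<Sum>R | Q \<subseteq> R \<and> R \<subseteq> ?N. (-1) ^ card R * char_imset D $ insert x R)"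
    by (simp add: moebius_vec_def inner_sum_left inner_axis')
  also have "\<dots> = (-1) ^ card Q * (\<Sum>R | Q \<subseteq> R \<and> R \<subseteq> ?N. if R \<subseteq> ?p then (-1) ^ card R else 0)"
  proof (intro arg_cong[where f = "(*) _"] sum.cong refl)
    fix R
    assume "R \<in> {R. Q \<subseteq> R \<and> R \<subseteq> ?N}"
    moreover from this have "2 \<le> card R"
      using Q(2) card_mono[of R Q] by auto
    ultimately show "(-1) ^ card R * char_imset D $ insert x R
        = (if R \<subseteq> ?p then (-1) ^ card R else 0)"
      using char_imset_insert_neighbours[OF simple tri] by simp
  qed
  also have "\<dots> = (-1) ^ card Q * (\<Sum>R | Q \<subseteq> R \<and> R \<subseteq> ?p. (-1) ^ card R)"
    using parents_subset_neighbours[of D x]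
    by (simp add: sum.inter_filter[symmetric]) (intro arg_cong[where f = "sum _"], blast)
  also have "\<dots> = (if ?p = Q then 1 else 0)"
  proof (cases "Q \<subseteq> ?p")
    case True
    then show ?thesis
      by (simp add: sum_alternating_interval_subsets flip: power_add)
  next
    case False
    then have "{R. Q \<subseteq> R \<and> R \<subseteq> ?p} = {}" "?p \<noteq> Q"
      by blast+
    then show ?thesis
      by (simp only: sum.empty mult_zero_right if_False)
  qed
  finally show ?thesis .
qed

definition score_vec :: "'n::finite set set \<Rightarrow> ('n \<Rightarrow> 'n set \<Rightarrow> real) \<Rightarrow> real ^ ('n set)" where
  "score_vec G F = (\<Sum>x\<in>UNIV. \<Sum>Q | Q \<subseteq> neighbours G x \<and> 2 \<le> card Q.
     (F x Q - F x {}) *\<^sub>R moebius_vec G x Q)"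

lemma inner_score_vec_char_imset:
  fixes D :: "('n::finite \<times> 'n) set"
  assumes simple: "is_simple_graph (skeleton D)" and tri: "triangle_free (skeleton D)"
  shows "score_vec (skeleton D) F \<bullet> char_imset D = (\<Sum>x\<in>UNIV. F x (collider_parents D x) - F x {})"
proof (unfold score_vec_def inner_sum_left, intro sum.cong refl)
  fix x
  let ?Qs = "{Q. Q \<subseteq> neighbours (skeleton D) x \<and> 2 \<le> card Q}"
  have "(\<Sum>Q\<in>?Qs. (F x Q - F x {}) *\<^sub>R moebius_vec (skeleton D) x Q \<bullet> char_imset D)
      = (\<Sum>Q\<in>?Qs. if parents D x = Q then F x Q - F x {} else 0)"
    by (intro sum.cong refl) (simp add: inner_moebius_vec_char_imset[OF simple tri])
  also have "\<dots> = F x (collider_parents D x) - F x {}"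
    using parents_subset_neighbours[of D x]
    by (auto simp: sum.delta collider_parents_def)
  finally show "(\<Sum>Q\<in>?Qs. (F x Q - F x {}) *\<^sub>R moebius_vec (skeleton D) x Q \<bullet> char_imset D)
      = F x (collider_parents D x) - F x {}" .
qed

lemma convex_hull_pair_face_of_convex_hull:
  fixes V :: "'a::euclidean_space set"
  assumes "finite V" "u \<in> V" "v \<in> V"
    and le: "\<And>y. y \<in> V \<Longrightarrow> a \<bullet> y \<le> b" and eq: "a \<bullet> u = b" "a \<bullet> v = b"
    and only: "\<And>y. y \<in> V \<Longrightarrow> a \<bullet> y = b \<Longrightarrow> y = u \<or> y = v"
  shows "convex hull {u, v} face_of convex hull V"
proof -
  let ?H = "convex hull V \<inter> {y. a \<bullet> y = b}"
  have "convex hull V \<subseteq> {y. a \<bullet> y \<le> b}"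
    using le by (intro hull_minimal) (auto simp: convex_halfspace_le)
  then have face: "?H face_of convex hull V"
    by (intro face_of_Int_supporting_hyperplane_le) auto
  obtain S where S: "S \<subseteq> V" "?H = convex hull S"
    using face_of_convex_hull_subset[OF finite_imp_compact[OF \<open>finite V\<close>] face] by blast
  have "S \<subseteq> {u, v}"
    using S hull_subset[of S convex] only by blast
  then have "?H \<subseteq> convex hull {u, v}"
    using S(2) hull_mono by metis
  moreover have "convex hull {u, v} \<subseteq> ?H"
    using assms(2,3) eq hull_subset[of V convex] face_of_imp_convex[OF face]
    by (intro hull_minimal) auto
  ultimately show ?thesis
    using face by simp
qed

definition dags :: "'n set set \<Rightarrow> ('n \<times> 'n) set set" where
  "dags G = {D. is_dag D \<and> skeleton D = G}"

lemma CIM_eq_convex_hull_dags: "CIM G = convex hull (char_imset ` dags G)"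
  unfolding CIM_def dags_def by (simp add: setcompr_eq_image)

definition is_mixture :: "('n \<times> 'n) set \<Rightarrow> ('n \<times> 'n) set \<Rightarrow> ('n \<times> 'n) set \<Rightarrow> bool" where
  "is_mixture E D1 D2 \<longleftrightarrow>
     (\<forall>x. collider_parents E x = collider_parents D1 x \<or>
          collider_parents E x = collider_parents D2 x)"

lemma convex_hull_pair_face_of_CIM:
  fixes G :: "'n::finite set set"
  assumes simple: "is_simple_graph G" and tri: "triangle_free G"
    and D: "D1 \<in> dags G" "D2 \<in> dags G"
    and mixtures: "\<And>E. E \<in> dags G \<Longrightarrow> is_mixture E D1 D2 \<Longrightarrow>
                      char_imset E = char_imset D1 \<or> char_imset E = char_imset D2"
  shows "convex hull {char_imset D1, char_imset D2} face_of CIM G"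
proof -
  define F where
    "F x l = (if l = collider_parents D1 x \<or> l = collider_parents D2 x then 0 else -1::real)" for x l
  define b where "b = - (\<Sum>x\<in>UNIV. F x {})"
  have score: "score_vec G F \<bullet> char_imset E = b - real (card {x. F x (collider_parents E x) \<noteq> 0})"
    if "E \<in> dags G" for E
  proof -
    have "score_vec G F \<bullet> char_imset E = (\<Sum>x\<in>UNIV. F x (collider_parents E x)) + b"
      using that inner_score_vec_char_imset[of E F] simple tri
      by (simp add: dags_def b_def sum_subtractf)
    also have "(\<Sum>x\<in>UNIV. F x (collider_parents E x))
        = - real (card {x. F x (collider_parents E x) \<noteq> 0})"
      by (simp add: F_def sum.If_cases Collect_neg_eq[symmetric])
    finally show ?thesis by simp
  qed
  have maximal_iff: "score_vec G F \<bullet> char_imset E = b \<longleftrightarrow> is_mixture E D1 D2" if "E \<in> dags G" for E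
    using score[OF that] by (simp add: is_mixture_def F_def)
  show ?thesis
    unfolding CIM_eq_convex_hull_dags
  proof (rule convex_hull_pair_face_of_convex_hull[where a = "score_vec G F" and b = b])
    show "finite (char_imset ` dags G)"
      by simp
    show "score_vec G F \<bullet> y = b \<Longrightarrow> y = char_imset D1 \<or> y = char_imset D2"
      if "y \<in> char_imset ` dags G" for y
      using that maximal_iff mixtures by blast
  qed (use D score maximal_iff in \<open>auto simp: is_mixture_def\<close>)
qed

lemma char_imset_extreme_point_of_CIM:
  fixes G :: "'n::finite set set"
  assumes "is_simple_graph G" "triangle_free G" "D \<in> dags G"
  shows "char_imset D extreme_point_of CIM G"
proof -
  have "is_mixture E D D \<Longrightarrow> char_imset E = char_imset D" if "E \<in> dags G" for E
    using that assms(3) char_imset_eqI[of E D] by (auto simp: is_mixture_def dags_def fun_eq_iff)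
  then have "convex hull {char_imset D} face_of CIM G"
    using convex_hull_pair_face_of_CIM[OF assms(1,2,3,3)] by simp
  then show ?thesis
    by (simp add: face_of_singleton)
qed

lemma poly_walk_refl: "poly_walk P u u 0"
  unfolding poly_walk_def by (intro exI[of _ "[u]"]) simp

lemma poly_walk_Cons:
  assumes "poly_edge P u w" "poly_walk P w v k"
  shows "poly_walk P u v (Suc k)"
proof -
  obtain xs where xs: "length xs = Suc k" "hd xs = w" "last xs = v"
    "\<forall>i<k. poly_edge P (xs ! i) (xs ! Suc i)"
    using assms(2) by (auto simp: poly_walk_def)
  then have "xs \<noteq> []"
    by auto
  show ?thesis
    unfolding poly_walk_def
  proof (intro exI[of _ "u # xs"] conjI allI impI)
    fix i
    assume "i < Suc k"
    then show "poly_edge P ((u # xs) ! i) ((u # xs) ! Suc i)"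
      using xs assms(1) \<open>xs \<noteq> []\<close> by (cases i) (auto simp: hd_conv_nth)
  qed (use xs \<open>xs \<noteq> []\<close> in auto)
qed

lemma poly_dist_le: "poly_walk P u v k \<Longrightarrow> poly_dist P u v \<le> enat k"
  by (auto simp: poly_dist_def Least_le)

text \<open>Minimality of D' is what makes the segment an edge: a mixture of D1 and D' whose imset
  differs from c(D1) is again a candidate and changes only collider parent sets that D' changes.\<close>
lemma CIM_edge_towards:
  fixes G :: "'n::finite set set"
  assumes simple: "is_simple_graph G" and tri: "triangle_free G"
    and D: "D1 \<in> dags G" "D2 \<in> dags G" "char_imset D1 \<noteq> char_imset D2"
  obtains D' where "D' \<in> dags G" "is_mixture D' D1 D2" "char_imset D' \<noteq> char_imset D1"
    "poly_edge (CIM G) (char_imset D1) (char_imset D')"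
proof -
  define changed where "changed E = {x. collider_parents E x \<noteq> collider_parents D1 x}" for E
  define candidates where
    "candidates = {E \<in> dags G. is_mixture E D1 D2 \<and> char_imset E \<noteq> char_imset D1}"
  have "D2 \<in> candidates"
    using D by (auto simp: candidates_def is_mixture_def)
  then obtain D' where D': "D' \<in> candidates"
    and least: "\<And>E. E \<in> candidates \<Longrightarrow> card (changed D') \<le> card (changed E)"
    using ex_has_least_nat[of "\<lambda>E. E \<in> candidates" D2 "\<lambda>E. card (changed E)"] by blast
  have "char_imset E = char_imset D'"
    if E: "E \<in> dags G" "is_mixture E D1 D'" "char_imset E \<noteq> char_imset D1" for E
  proof -
    have E_or_D':
      "collider_parents E x = collider_parents D1 x \<or> collider_parents E x = collider_parents D' x"
      for x
      using E(2) by (simp add: is_mixture_def)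
    have
      "collider_parents D' x = collider_parents D1 x \<or> collider_parents D' x = collider_parents D2 x"
      for x
      using D' by (simp add: candidates_def is_mixture_def)
    then have "is_mixture E D1 D2"
      unfolding is_mixture_def using E_or_D' by metis
    then have "E \<in> candidates"
      using E(1,3) by (simp add: candidates_def)
    moreover have "changed E \<subseteq> changed D'"
      unfolding changed_def using E_or_D' by force
    ultimately have "changed E = changed D'"
      using least[of E] card_mono[of "changed D'" "changed E"] by (intro card_subset_eq) auto
    then have "collider_parents E = collider_parents D'"
      unfolding changed_def fun_eq_iff using E_or_D' by blast
    then show ?thesis
      using E(1) D' char_imset_eqI[of E D'] by (simp add: candidates_def dags_def)
  qed
  moreover have D'_props: "D' \<in> dags G" "is_mixture D' D1 D2" "char_imset D' \<noteq> char_imset D1"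
    using D' by (simp_all add: candidates_def)
  ultimately have "convex hull {char_imset D1, char_imset D'} face_of CIM G"
    using D(1) by (intro convex_hull_pair_face_of_CIM[OF simple tri]) blast+
  then have "poly_edge (CIM G) (char_imset D1) (char_imset D')"
    using D(1) D'_props char_imset_extreme_point_of_CIM[OF simple tri]
    by (simp add: poly_edge_def poly_vertices_def)
  with D'_props show ?thesis
    by (rule that)
qed

lemma exists_short_CIM_walk:
  fixes G :: "'n::finite set set"
  assumes simple: "is_simple_graph G" and tri: "triangle_free G"
    and D: "D1 \<in> dags G" "D2 \<in> dags G"
  shows "\<exists>k \<le> card {x. collider_parents D1 x \<noteq> collider_parents D2 x}.
           poly_walk (CIM G) (char_imset D1) (char_imset D2) k"
  using D
proof (induction "card {x. collider_parents D1 x \<noteq> collider_parents D2 x}" arbitrary: D1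
    rule: less_induct)
  case less
  show ?case
  proof (cases "char_imset D1 = char_imset D2")
    case True
    then show ?thesis
      using poly_walk_refl by auto
  next
    case False
    then obtain D' where D': "D' \<in> dags G" "is_mixture D' D1 D2" "char_imset D' \<noteq> char_imset D1"
      and edge: "poly_edge (CIM G) (char_imset D1) (char_imset D')"
      using CIM_edge_towards[OF simple tri less.prems] by blast
    have "collider_parents D' \<noteq> collider_parents D1"
      using D' less.prems char_imset_eqI[of D' D1] by (auto simp: dags_def)
    then obtain y where "collider_parents D' y \<noteq> collider_parents D1 y"
      by blast
    with D'(2) have "{x. collider_parents D' x \<noteq> collider_parents D2 x}
        \<subset> {x. collider_parents D1 x \<noteq> collider_parents D2 x}"
      unfolding is_mixture_def by blast
    then have fewer: "card {x. collider_parents D' x \<noteq> collider_parents D2 x}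
        < card {x. collider_parents D1 x \<noteq> collider_parents D2 x}"
      by (intro psubset_card_mono) auto
    then obtain k where "k \<le> card {x. collider_parents D' x \<noteq> collider_parents D2 x}"
      "poly_walk (CIM G) (char_imset D') (char_imset D2) k"
      using less.hyps D'(1) less.prems(2) by blast
    then show ?thesis
      using poly_walk_Cons[OF edge] fewer by (intro exI[of _ "Suc k"]) auto
  qed
qed

lemma collider_vertex_in_internal_vertices:
  fixes D :: "('n::finite \<times> 'n) set"
  assumes simple: "is_simple_graph (skeleton D)" and "collider_parents D x \<noteq> {}"
  shows "x \<in> internal_vertices (skeleton D)"
proof -
  have "2 \<le> card (parents D x)"
    using assms(2) by (simp add: collider_parents_def split: if_splits)
  also have "card (parents D x) \<le> card {e \<in> skeleton D. x \<in> e}"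
  proof (rule card_inj_on_le[where f = "\<lambda>y. {x, y}"])
    show "inj_on (\<lambda>y. {x, y}) (parents D x)"
      using parents_subset_neighbours[of D x] not_in_neighbours[OF simple, of x]
      by (auto simp: inj_on_def doubleton_eq_iff)
    show "(\<lambda>y. {x, y}) ` parents D x \<subseteq> {e \<in> skeleton D. x \<in> e}"
      using parents_subset_neighbours[of D x] by (auto simp: neighbours_def)
  qed simp
  finally show ?thesis
    by (simp add: internal_vertices_def degree_def)
qed

theorem poly_diam_CIM_le_internal_vertices:
  fixes G :: "'n::finite set set"
  assumes simple: "is_simple_graph G" and tri: "triangle_free G"
  shows "poly_diam (CIM G) \<le> enat (card (internal_vertices G))"
  unfolding poly_diam_def
proof (rule Sup_least, clarify)
  fix u v
  assume "u \<in> poly_vertices (CIM G)" "v \<in> poly_vertices (CIM G)"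
  then have "u \<in> char_imset ` dags G" "v \<in> char_imset ` dags G"
    using extreme_point_of_convex_hull by (auto simp: poly_vertices_def CIM_eq_convex_hull_dags)
  then obtain D1 D2 where D: "D1 \<in> dags G" "D2 \<in> dags G" "u = char_imset D1" "v = char_imset D2"
    by blast
  have "{x. collider_parents D1 x \<noteq> collider_parents D2 x} \<subseteq> internal_vertices G"
    using D simple collider_vertex_in_internal_vertices[of D1]
      collider_vertex_in_internal_vertices[of D2]
    by (auto simp: dags_def)
  then have "card {x. collider_parents D1 x \<noteq> collider_parents D2 x} \<le> card (internal_vertices G)"
    by (intro card_mono) auto
  then show "poly_dist (CIM G) u v \<le> enat (card (internal_vertices G))"
    using exists_short_CIM_walk[OF simple tri D(1,2)] poly_dist_le D(3,4)
    by (meson dual_order.trans enat_ord_simps(1))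
qed

theorem mainTheorem2:
  fixes G :: "('n::finite) set set"
  assumes "is_tree G"
  shows "poly_diam (CIM G) \<le> enat (card (internal_vertices G))"
  using poly_diam_CIM_le_internal_vertices[OF _ tree_imp_triangle_free[OF assms]] assms
  by (simp add: is_tree_def)

end
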